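(* Let $\phi$ be an LTL formula. If some tableau for $\phi$ has a ticked leaf, then $\phi$ is satisfiable. Moreover, this remains true for tableaux in which the PRUNE and PRUNE$_0$ rules are not applied even when applicable, i.e. every ticked branch encodes a model of $\phi$.
   Context: LTL formulas over a countable set $AP$ of atoms are built from atoms $p\in AP$ and the constant $\top$ using $\neg\alpha$, $\alpha\wedge\beta$, $X\alpha$ and $\alpha U\beta$. We write $\bot$ for $\neg\top$. A structure is a triple $(S,R,g)$ where $S$ is a finite set, $R\subseteq S\times S$ is serial (every state has an $R$-successor), and $g:S\to 2^{AP}$. A fullpath is a sequence $\sigma=\langle s_0,s_1,\dots\rangle$ with $(s_i,s_{i+1})\in R$ for all $i$. We write $\sigma_i=s_i$ and $\sigma_{\ge j}=\langle s_j,s_{j+1},\dots\rangle$. Truth is defined as follows: - $\sigma\models p$ iff $p\in g(\sigma_0)$; - $\sigma\models\top$ always; - $\neg$ and $\wedge$ are classical; - $\sigma\models X\alpha$ iff $\sigma_{\ge1}\models\alpha$; - $\sigma\models\alpha U\beta$ iff there is $i\ge0$ with $\sigma_{\ge i}\models\beta$ and $\sigma_{\ge j}\models\alpha$ for all $0\le j<i$. A formula is satisfiable iff it is true on some fullpath of some structure. Tableau. A tableau for $\phi$ is a finite rooted tree. Each node $u$ carries a finite set of formulas $\Gamma_u$ (its label), and the root is labelled $\{\phi\}$. We write $u<v$ when $u$ is a proper ancestor of $v$ and $u\le v$ when it is an ancestor or equal. A formula is elementary if it is an atom, a negated atom, or of the form $X\alpha$ or $\neg X\alpha$. A label is poised if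 it is nonempty, contains no pair $\alpha,\neg\alpha$, and all its formulas are elementary. An $X$-eventuality of a poised label is a member of the form $X(\alpha U\beta)$. Static rules are written "parent label / children", where $\{\chi\}\mathbin{\dot\cup}\Delta$ means $\chi\notin\Delta$: - EMPTY: $\{\}$ / tick. - CONTRADICTION: $\{\alpha,\neg\alpha\}\mathbin{\dot\cup}\Delta$ / cross. - $\neg\top$: $\{\neg\top\}\mathbin{\dot\cup}\Delta$ / cross. - $\top$: $\{\top\}\mathbin{\dot\cup}\Delta$ / $\Delta$. - $\wedge$: $\{\alpha\wedge\beta\}\mathbin{\dot\cup}\Delta$ / $\Delta\cup\{\alpha,\beta\}$. - $U$: $\{\alpha U\beta\}\mathbin{\dot\cup}\Delta$ / two children $\Delta\cup\{\beta\}$ and $\Delta\cup\{\alpha,X(\alpha U\beta)\}$. - $\neg\neg$: $\{\neg\neg\alpha\}\mathbin{\dot\cup}\Delta$ / $\Delta\cup\{\alpha\}$. - $\neg\wedge$: $\{\neg(\alpha\wedge\beta)\}\mathbin{\dot\cup}\Delta$ / two children $\Delta\cup\{\neg\alpha\}$ and $\Delta\cup\{\neg\beta\}$. - $\neg U$: $\{\neg(\alpha U\beta)\}\mathbin{\dot\cup}\Delta$ / two children $\Delta\cup\{\neg\alpha,\neg\beta\}$ and $\Delta\cup\{\neg\beta,X\neg(\alpha U\beta)\}$. Non-static rules apply only to a leaf $v$ with poised label. The first applicable one in the following list is used. - LOOP: if some $u<v$ has poised $\Gamma_u\supseteq\Gamma_v$, and for every $X(\alpha U\beta)\in\Gamma_u$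 there is $w$ with $u<w\le v$ and $\beta\in\Gamma_w$, then $v$ is ticked. - PRUNE: if $u<v'<v$ all have the same poised label $\Gamma$, and for every $X(\alpha U\beta)\in\Gamma$, whenever some $x$ with $v'<x\le v$ has $\beta\in\Gamma_x$ there is $y$ with $u<y\le v'$ and $\beta\in\Gamma_y$, then $v$ is crossed. - PRUNE$_0$: if $u<v$ share the same poised label $\Gamma$, $\Gamma$ contains at least one $X$-eventuality, and for no $X(\alpha U\beta)\in\Gamma$ is there $x$ with $u<x\le v$ and $\beta\in\Gamma_x$, then $v$ is crossed. - TRANSITION: otherwise $v$ gets one child labelled $\{\alpha: X\alpha\in\Gamma_v\}\cup\{\neg\alpha:\neg X\alpha\in\Gamma_v\}$. A tableau is constructed from the root by repeatedly choosing any leaf that is neither ticked nor crossed and applying an applicable rule. For non-poised labels this means any applicable static rule to any suitable pivot formula. A tableau is finished if every leaf is ticked or crossed, and successful if some leaf is ticked. *)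

theory Defs
  imports "HOL-Library.Sublist"
begin

datatype 'a ltl =
    Atom 'a
  | Top
  | Neg "'a ltl"
  | And "'a ltl" "'a ltl"
  | Next "'a ltl"
  | Until "'a ltl" "'a ltl"

text \<open>Truth of a formula on a fullpath sigma (a sequence of states, here natural
  numbers) under the valuation g.  The suffix starting at j is (%k. sigma (k + j)).\<close>
fun holds :: "(nat \<Rightarrow> 'a set) \<Rightarrow> (nat \<Rightarrow> nat) \<Rightarrow> 'a ltl \<Rightarrow> bool" where
  "holds g \<sigma> (Atom p) = (p \<in> g (\<sigma> 0))"
| "holds g \<sigma> Top = True"
| "holds g \<sigma> (Neg a) = (\<not> holds g \<sigma> a)"
| "holds g \<sigma> (And a b) = (holds g \<sigma> a \<and> holds g \<sigma> b)"
| "holds g \<sigma> (Next a) = holds g (\<lambda>k. \<sigma> (Suc k)) a"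
| "holds g \<sigma> (Until a b) =
     (\<exists>i. holds g (\<lambda>k. \<sigma> (k + i)) b \<and> (\<forall>j<i. holds g (\<lambda>k. \<sigma> (k + j)) a))"

text \<open>A structure (S,R,g) with S finite and R serial on S.  States are taken to be
  natural numbers; every finite structure is isomorphic to one of this form.\<close>
definition ltl_structure :: "nat set \<Rightarrow> (nat \<times> nat) set \<Rightarrow> bool" where
  "ltl_structure S R \<longleftrightarrow> finite S \<and> R \<subseteq> S \<times> S \<and> (\<forall>s\<in>S. \<exists>t. (s, t) \<in> R)"

definition fullpath :: "(nat \<times> nat) set \<Rightarrow> (nat \<Rightarrow> nat) \<Rightarrow> bool" where
  "fullpath R \<sigma> \<longleftrightarrow> (\<forall>i. (\<sigma> i, \<sigma> (Suc i)) \<in> R)"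

definition satisfiable :: "'a ltl \<Rightarrow> bool" where
  "satisfiable \<phi> \<longleftrightarrow>
     (\<exists>S R (g :: nat \<Rightarrow> 'a set) \<sigma>. ltl_structure S R \<and> fullpath R \<sigma> \<and> holds g \<sigma> \<phi>)"

fun elementary :: "'a ltl \<Rightarrow> bool" where
  "elementary (Atom p) = True"
| "elementary (Neg (Atom p)) = True"
| "elementary (Next a) = True"
| "elementary (Neg (Next a)) = True"
| "elementary _ = False"

definition poised :: "'a ltl set \<Rightarrow> bool" where
  "poised \<Gamma> \<longleftrightarrow> \<Gamma> \<noteq> {} \<and> (\<forall>a. \<not> (a \<in> \<Gamma> \<and> Neg a \<in> \<Gamma>)) \<and> (\<forall>f\<in>\<Gamma>. elementary f)"

datatype mark = Ticked | Crossed | Unexpanded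

text \<open>A tableau is represented by a finite prefix-closed set N of node addresses
  (lists of child indices, root = []), a labelling L and a marking M.
  The ancestor relation u < v is strict_prefix u v, u \<le> v is prefix u v.\<close>

definition children :: "nat list set \<Rightarrow> nat list \<Rightarrow> nat list set" where
  "children N v = {w \<in> N. \<exists>i. w = v @ [i]}"

definition loop_app :: "(nat list \<Rightarrow> 'a ltl set) \<Rightarrow> nat list \<Rightarrow> bool" where
  "loop_app L v \<longleftrightarrow> poised (L v) \<and>
     (\<exists>u. strict_prefix u v \<and> poised (L u) \<and> L v \<subseteq> L u \<and>
        (\<forall>a b. Next (Until a b) \<in> L u \<longrightarrow>
           (\<exists>w. strict_prefix u w \<and> prefix w v \<and> b \<in> L w)))"

definition prune_app :: "(nat list \<Rightarrow> 'a ltl set) \<Rightarrow> nat list \<Rightarrow> bool" where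
  "prune_app L v \<longleftrightarrow> poised (L v) \<and>
     (\<exists>u v'. strict_prefix u v' \<and> strict_prefix v' v \<and> L u = L v \<and> L v' = L v \<and>
        (\<forall>a b. Next (Until a b) \<in> L v \<longrightarrow>
           (\<exists>x. strict_prefix v' x \<and> prefix x v \<and> b \<in> L x) \<longrightarrow>
           (\<exists>y. strict_prefix u y \<and> prefix y v' \<and> b \<in> L y)))"

definition prune0_app :: "(nat list \<Rightarrow> 'a ltl set) \<Rightarrow> nat list \<Rightarrow> bool" where
  "prune0_app L v \<longleftrightarrow> poised (L v) \<and>
     (\<exists>u. strict_prefix u v \<and> L u = L v \<and>
        (\<exists>a b. Next (Until a b) \<in> L v) \<and>
        \<not> (\<exists>a b x. Next (Until a b) \<in> L v \<and> strict_prefix u x \<and> prefix x v \<and> b \<in> L x))"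

definition transition_label :: "'a ltl set \<Rightarrow> 'a ltl set" where
  "transition_label \<Gamma> = {a. Next a \<in> \<Gamma>} \<union> {Neg a | a. Neg (Next a) \<in> \<Gamma>}"

definition static_step :: "nat list set \<Rightarrow> (nat list \<Rightarrow> 'a ltl set) \<Rightarrow> nat list \<Rightarrow> bool" where
  "static_step N L v \<longleftrightarrow> \<not> poised (L v) \<and>
     (\<exists>\<chi>\<in>L v. let \<Delta> = L v - {\<chi>} in
        (\<chi> = Top \<and> children N v = {v @ [0]} \<and> L (v @ [0]) = \<Delta>)
      \<or> (\<exists>a b. \<chi> = And a b \<and> children N v = {v @ [0]} \<and> L (v @ [0]) = \<Delta> \<union> {a, b})
      \<or> (\<exists>a b. \<chi> = Until a b \<and> children N v = {v @ [0], v @ [1]} \<and>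
           L (v @ [0]) = \<Delta> \<union> {b} \<and> L (v @ [1]) = \<Delta> \<union> {a, Next (Until a b)})
      \<or> (\<exists>a. \<chi> = Neg (Neg a) \<and> children N v = {v @ [0]} \<and> L (v @ [0]) = \<Delta> \<union> {a})
      \<or> (\<exists>a b. \<chi> = Neg (And a b) \<and> children N v = {v @ [0], v @ [1]} \<and>
           L (v @ [0]) = \<Delta> \<union> {Neg a} \<and> L (v @ [1]) = \<Delta> \<union> {Neg b})
      \<or> (\<exists>a b. \<chi> = Neg (Until a b) \<and> children N v = {v @ [0], v @ [1]} \<and>
           L (v @ [0]) = \<Delta> \<union> {Neg a, Neg b} \<and>
           L (v @ [1]) = \<Delta> \<union> {Neg b, Next (Neg (Until a b))}))"

text \<open>The flag use_prune says whether the PRUNE / PRUNE0 rules are in use.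
  With use_prune = True this is exactly the tableau of the paper (possibly still under
  construction: leaves may be Unexpanded).\<close>
definition tableau_node :: "bool \<Rightarrow> nat list set \<Rightarrow> (nat list \<Rightarrow> 'a ltl set) \<Rightarrow>
    (nat list \<Rightarrow> mark) \<Rightarrow> nat list \<Rightarrow> bool" where
  "tableau_node use_prune N L M v \<longleftrightarrow>
     (if children N v = {} then
        (M v = Ticked \<longrightarrow> (L v = {} \<or> loop_app L v)) \<and>
        (M v = Crossed \<longrightarrow>
           (\<not> poised (L v) \<and> ((\<exists>a. a \<in> L v \<and> Neg a \<in> L v) \<or> Neg Top \<in> L v))
         \<or> (use_prune \<and> poised (L v) \<and> \<not> loop_app L v \<and> (prune_app L v \<or> prune0_app L v)))
      else
        M v = Unexpanded \<and>
        (static_step N L v \<or>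
         (poised (L v) \<and> \<not> loop_app L v \<and>
          (use_prune \<longrightarrow> \<not> prune_app L v \<and> \<not> prune0_app L v) \<and>
          children N v = {v @ [0]} \<and> L (v @ [0]) = transition_label (L v))))"

definition is_tableau :: "bool \<Rightarrow> 'a ltl \<Rightarrow> nat list set \<Rightarrow> (nat list \<Rightarrow> 'a ltl set) \<Rightarrow>
    (nat list \<Rightarrow> mark) \<Rightarrow> bool" where
  "is_tableau use_prune \<phi> N L M \<longleftrightarrow>
     finite N \<and> [] \<in> N \<and> (\<forall>v\<in>N. \<forall>u. prefix u v \<longrightarrow> u \<in> N) \<and>
     L [] = {\<phi>} \<and> (\<forall>v\<in>N. tableau_node use_prune N L M v)"

end

theory Submission
  imports Defs
begin

text \<open>
  Follow the branch from the root to a ticked leaf and unwind it into an infinite sequence of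
  labels: an EMPTY leaf is repeated forever, a LOOP leaf v with companion u is followed by the
  segment strictly after u up to v, over and over again.  The poised labels of this sequence are
  the states of a model on finitely many states (the positions on the branch), valued by their
  atoms.  Every formula occurring in a label is then true at the state it belongs to, by
  induction on the formula: static rules decompose it inside a state, poised labels pass their
  X-formulas to the next state, and an until-formula that is put off forever would keep its
  X-eventuality in every later poised label, whereas the LOOP condition guarantees that each
  pass through the cycle meets its goal.
\<close>

definition static_child :: "'a ltl set \<Rightarrow> 'a ltl \<Rightarrow> 'a ltl set \<Rightarrow> bool" where
  "static_child \<Gamma> \<chi> \<Gamma>' \<longleftrightarrow> \<chi> \<in> \<Gamma> \<and>
     ((\<chi> = Top \<and> \<Gamma>' = \<Gamma> - {\<chi>})
    \<or> (\<exists>a b. \<chi> = And a b \<and> \<Gamma>' = (\<Gamma> - {\<chi>}) \<union> {a, b})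
    \<or> (\<exists>a b. \<chi> = Until a b \<and>
         (\<Gamma>' = (\<Gamma> - {\<chi>}) \<union> {b} \<or> \<Gamma>' = (\<Gamma> - {\<chi>}) \<union> {a, Next (Until a b)}))
    \<or> (\<exists>a. \<chi> = Neg (Neg a) \<and> \<Gamma>' = (\<Gamma> - {\<chi>}) \<union> {a})
    \<or> (\<exists>a b. \<chi> = Neg (And a b) \<and>
         (\<Gamma>' = (\<Gamma> - {\<chi>}) \<union> {Neg a} \<or> \<Gamma>' = (\<Gamma> - {\<chi>}) \<union> {Neg b}))
    \<or> (\<exists>a b. \<chi> = Neg (Until a b) \<and>
         (\<Gamma>' = (\<Gamma> - {\<chi>}) \<union> {Neg a, Neg b} \<or>
          \<Gamma>' = (\<Gamma> - {\<chi>}) \<union> {Neg b, Next (Neg (Until a b))})))"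

lemma static_child_keeps: "static_child \<Gamma> \<chi> \<Gamma>' \<Longrightarrow> f \<in> \<Gamma> \<Longrightarrow> f \<noteq> \<chi> \<Longrightarrow> f \<in> \<Gamma>'"
  unfolding static_child_def by auto

lemma poised_elementary: "poised \<Gamma> \<Longrightarrow> f \<in> \<Gamma> \<Longrightarrow> elementary f"
  unfolding poised_def by auto

lemma transition_label_mono: "\<Gamma> \<subseteq> \<Gamma>' \<Longrightarrow> transition_label \<Gamma> \<subseteq> transition_label \<Gamma>'"
  unfolding transition_label_def by auto

section \<open>Runs\<close>

text \<open>
  A run is a sequence of labels in which non-poised labels are expanded by static rules and
  poised labels are followed by (a superset of) their transition label; the superset is what a
  LOOP back to a larger companion label produces.  The poised labels are the states of the
  model, and time j is the index of the state that position j belongs to.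
\<close>

locale tableau_run =
  fixes \<Lambda> :: "nat \<Rightarrow> 'a ltl set"
  assumes static: "\<And>j. \<not> poised (\<Lambda> j) \<Longrightarrow> \<Lambda> j = {} \<or> (\<exists>\<chi>. static_child (\<Lambda> j) \<chi> (\<Lambda> (Suc j)))"
    and transition: "\<And>j. poised (\<Lambda> j) \<Longrightarrow> transition_label (\<Lambda> j) \<subseteq> \<Lambda> (Suc j)"
    and poised_or_empty_ahead: "\<And>j. \<exists>d. poised (\<Lambda> (j + d)) \<or> \<Lambda> (j + d) = {}"
    and fair: "\<And>j a b. (\<forall>j'\<ge>j. \<exists>j''\<ge>j'. poised (\<Lambda> j'')) \<Longrightarrow>
      (\<forall>j'\<ge>j. poised (\<Lambda> j') \<longrightarrow> Next (Until a b) \<in> \<Lambda> j') \<Longrightarrow> \<exists>j'\<ge>j. b \<in> \<Lambda> j'"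
begin

primrec time :: "nat \<Rightarrow> nat" where
  "time 0 = 0"
| "time (Suc j) = time j + (if poised (\<Lambda> j) then 1 else 0)"

lemma time_mono: "j \<le> j' \<Longrightarrow> time j \<le> time j'"
  by (rule lift_Suc_mono_le[of time]) simp_all

lemma poised_between:
  assumes "time j < time j'"
  shows "\<exists>i. j \<le> i \<and> i < j' \<and> poised (\<Lambda> i)"
  using assms
proof (induction j')
  case (Suc j')
  show ?case
  proof (cases "poised (\<Lambda> j') \<and> j \<le> j'")
    case False
    moreover have "j \<le> j'"
      using Suc.prems time_mono[of "Suc j'" j] by (cases "j \<le> j'") auto
    ultimately show ?thesis using Suc by (auto intro: less_SucI)
  qed auto
qed simp

lemma poised_time_unique:
  assumes "poised (\<Lambda> i)" "poised (\<Lambda> j)" "time i = time j"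
  shows "i = j"
proof (rule ccontr)
  assume "i \<noteq> j"
  then have "time (Suc (min i j)) \<le> time (max i j)"
    by (intro time_mono) auto
  with assms show False by (auto simp: min_def max_def split: if_splits)
qed

lemma expanded_or_poised:
  assumes "f \<in> \<Lambda> j"
  shows "\<exists>j'. time j' = time j \<and> f \<in> \<Lambda> j' \<and>
    (poised (\<Lambda> j') \<or> static_child (\<Lambda> j') f (\<Lambda> (Suc j')))"
proof -
  obtain e where "poised (\<Lambda> (j + e)) \<or> \<Lambda> (j + e) = {}"
    using poised_or_empty_ahead by blast
  with assms show ?thesis
  proof (induction e arbitrary: j)
    case (Suc e)
    show ?case
    proof (cases "poised (\<Lambda> j)")
      case False
      then obtain \<chi> where \<chi>: "static_child (\<Lambda> j) \<chi> (\<Lambda> (Suc j))"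
        using static Suc.prems(1) by blast
      show ?thesis
      proof (cases "f = \<chi>")
        case False
        then have "f \<in> \<Lambda> (Suc j)" using static_child_keeps[OF \<chi> Suc.prems(1)] by blast
        with Suc.prems(2) Suc.IH[of "Suc j"] \<open>\<not> poised (\<Lambda> j)\<close> show ?thesis by auto
      qed (use \<chi> Suc.prems in auto)
    qed (use Suc.prems in auto)
  qed auto
qed

lemma expanded_at_time:
  assumes "f \<in> \<Lambda> j" "\<not> elementary f"
  shows "\<exists>j' \<Gamma>. time j' = time j \<and> static_child \<Gamma> f (\<Lambda> j')"
proof -
  obtain j' where "time j' = time j" "\<not> poised (\<Lambda> j')" "static_child (\<Lambda> j') f (\<Lambda> (Suc j'))"
    using expanded_or_poised[OF assms(1)] poised_elementary assms(2) by blast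
  then show ?thesis by (intro exI[of _ "Suc j'"]) auto
qed

lemma reaches_poised:
  assumes "f \<in> \<Lambda> j" "\<And>\<Gamma> \<Gamma>'. \<not> static_child \<Gamma> f \<Gamma>'"
  shows "\<exists>j'. time j' = time j \<and> poised (\<Lambda> j') \<and> f \<in> \<Lambda> j'"
  using expanded_or_poised[OF assms(1)] assms(2) by blast

lemma next_transfers:
  assumes "Next f \<in> \<Lambda> j"
  shows "\<exists>j'. time j' = Suc (time j) \<and> f \<in> \<Lambda> j'"
    and "poised (\<Lambda> i) \<Longrightarrow> time i = time j \<Longrightarrow> Next f \<in> \<Lambda> i"
proof -
  obtain j' where j': "time j' = time j" "poised (\<Lambda> j')" "Next f \<in> \<Lambda> j'"
    using reaches_poised[OF assms] by (auto simp: static_child_def)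
  have "f \<in> \<Lambda> (Suc j')"
    using transition[OF j'(2)] j'(3) by (auto simp: transition_label_def)
  with j' show "\<exists>j'. time j' = Suc (time j) \<and> f \<in> \<Lambda> j'" by (intro exI[of _ "Suc j'"]) simp
  show "poised (\<Lambda> i) \<Longrightarrow> time i = time j \<Longrightarrow> Next f \<in> \<Lambda> i"
    using poised_time_unique j' by metis
qed

lemma neg_next_transfers:
  assumes "Neg (Next f) \<in> \<Lambda> j"
  shows "\<exists>j'. time j' = Suc (time j) \<and> Neg f \<in> \<Lambda> j'"
proof -
  obtain j' where j': "time j' = time j" "poised (\<Lambda> j')" "Neg (Next f) \<in> \<Lambda> j'"
    using reaches_poised[OF assms] by (auto simp: static_child_def)
  have "Neg f \<in> \<Lambda> (Suc j')"
    using transition[OF j'(2)] j'(3) by (auto simp: transition_label_def)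
  with j' show ?thesis by (intro exI[of _ "Suc j'"]) simp
qed

end

section \<open>The truth lemma\<close>

locale valued_run = tableau_run \<Lambda> for \<Lambda> :: "nat \<Rightarrow> 'a ltl set" +
  fixes g :: "nat \<Rightarrow> 'a set" and \<sigma> :: "nat \<Rightarrow> nat"
  assumes valuation: "\<And>j q. poised (\<Lambda> j) \<Longrightarrow> q \<in> g (\<sigma> (time j)) \<longleftrightarrow> Atom q \<in> \<Lambda> j"
begin

definition holds_at :: "'a ltl \<Rightarrow> nat \<Rightarrow> bool" where
  "holds_at f t = holds g (\<lambda>k. \<sigma> (k + t)) f"

lemma holds_at_simps [simp]:
  "holds_at (Atom q) t \<longleftrightarrow> q \<in> g (\<sigma> t)"
  "holds_at Top t"
  "holds_at (Neg f) t \<longleftrightarrow> \<not> holds_at f t"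
  "holds_at (And a b) t \<longleftrightarrow> holds_at a t \<and> holds_at b t"
  "holds_at (Next f) t \<longleftrightarrow> holds_at f (Suc t)"
  "holds_at (Until a b) t \<longleftrightarrow> (\<exists>i. holds_at b (i + t) \<and> (\<forall>i'<i. holds_at a (i' + t)))"
  by (simp_all add: holds_at_def add.assoc)

definition truthful :: "'a ltl \<Rightarrow> bool" where
  "truthful f \<longleftrightarrow> (\<forall>j. f \<in> \<Lambda> j \<longrightarrow> holds_at f (time j)) \<and>
     (\<forall>j. Neg f \<in> \<Lambda> j \<longrightarrow> \<not> holds_at f (time j))"

lemma truthfulD:
  "truthful f \<Longrightarrow> f \<in> \<Lambda> j \<Longrightarrow> holds_at f (time j)"
  "truthful f \<Longrightarrow> Neg f \<in> \<Lambda> j \<Longrightarrow> \<not> holds_at f (time j)"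
  unfolding truthful_def by blast+

lemma truthful_Atom: "truthful (Atom q)"
  unfolding truthful_def
proof (intro conjI allI impI)
  fix j
  assume "Atom q \<in> \<Lambda> j"
  then obtain j' where "time j' = time j" "poised (\<Lambda> j')" "Atom q \<in> \<Lambda> j'"
    using reaches_poised[of "Atom q" j] by (auto simp: static_child_def)
  with valuation[of j' q] show "holds_at (Atom q) (time j)" by simp
next
  fix j
  assume "Neg (Atom q) \<in> \<Lambda> j"
  then obtain j' where j': "time j' = time j" "poised (\<Lambda> j')" "Neg (Atom q) \<in> \<Lambda> j'"
    using reaches_poised[of "Neg (Atom q)" j] by (auto simp: static_child_def)
  then have "Atom q \<notin> \<Lambda> j'" unfolding poised_def by blast
  with j' valuation[of j' q] show "\<not> holds_at (Atom q) (time j)" by simp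
qed

lemma truthful_Top: "truthful Top"
proof -
  have "Neg Top \<notin> \<Lambda> j" for j
    using reaches_poised[of "Neg Top" j] poised_elementary by (fastforce simp: static_child_def)
  then show ?thesis unfolding truthful_def by simp
qed

lemma truthful_Neg:
  assumes "truthful f"
  shows "truthful (Neg f)"
proof -
  have "\<exists>j'. time j' = time j \<and> f \<in> \<Lambda> j'" if "Neg (Neg f) \<in> \<Lambda> j" for j
    using expanded_at_time[OF that] by (auto simp: static_child_def)
  with assms show ?thesis unfolding truthful_def by fastforce
qed

lemma truthful_And:
  assumes "truthful a" "truthful b"
  shows "truthful (And a b)"
proof -
  have "\<exists>j'. time j' = time j \<and> a \<in> \<Lambda> j' \<and> b \<in> \<Lambda> j'" if "And a b \<in> \<Lambda> j" for j
    using expanded_at_time[OF that] by (auto simp: static_child_def)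
  moreover have "\<exists>j'. time j' = time j \<and> (Neg a \<in> \<Lambda> j' \<or> Neg b \<in> \<Lambda> j')"
    if "Neg (And a b) \<in> \<Lambda> j" for j
    using expanded_at_time[OF that] by (auto simp: static_child_def)
  ultimately show ?thesis using assms unfolding truthful_def by fastforce
qed

lemma truthful_Next:
  assumes "truthful f"
  shows "truthful (Next f)"
  using assms next_transfers(1) neg_next_transfers unfolding truthful_def by fastforce

lemma until_holds:
  assumes a: "truthful a" and b: "truthful b" and until: "Until a b \<in> \<Lambda> j"
  shows "holds_at (Until a b) (time j)"
proof (rule ccontr)
  define t0 where "t0 = time j"
  assume fails: "\<not> holds_at (Until a b) (time j)"
  define P where "P n \<longleftrightarrow> (\<exists>j'. time j' = t0 + n \<and> Until a b \<in> \<Lambda> j') \<and>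
    (\<forall>i<n. holds_at a (i + t0))" for n
  have P_Suc: "P (Suc n) \<and> (\<forall>i. poised (\<Lambda> i) \<longrightarrow> time i = t0 + n \<longrightarrow> Next (Until a b) \<in> \<Lambda> i)"
    if Pn: "P n" for n
  proof -
    obtain j1 where j1: "time j1 = t0 + n" "Until a b \<in> \<Lambda> j1"
      and a_before: "\<forall>i<n. holds_at a (i + t0)"
      using Pn unfolding P_def by blast
    obtain j2 \<Gamma> where j2: "time j2 = t0 + n" "static_child \<Gamma> (Until a b) (\<Lambda> j2)"
      using expanded_at_time[OF j1(2)] j1(1) by auto
    have "b \<notin> \<Lambda> j2"
    proof
      assume "b \<in> \<Lambda> j2"
      then have "holds_at b (n + t0)" using truthfulD(1)[OF b, of j2] j2(1) by (simp add: add.commute)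
      with a_before fails show False unfolding t0_def by auto
    qed
    with j2(2) have "a \<in> \<Lambda> j2" "Next (Until a b) \<in> \<Lambda> j2"
      by (auto simp: static_child_def)
    moreover from this(1) have "holds_at a (n + t0)"
      using truthfulD(1)[OF a, of j2] j2(1) by (simp add: add.commute)
    ultimately show ?thesis
      using next_transfers[of "Until a b" j2] a_before j2(1)
      unfolding P_def by (auto simp: less_Suc_eq)
  qed
  have P: "P n" for n
  proof (induction n)
    case 0
    then show ?case using until unfolding P_def t0_def by auto
  qed (use P_Suc in blast)
  have later_time: "\<exists>n. time j' = t0 + n" if "j \<le> j'" for j'
    using time_mono[OF that] unfolding t0_def by (simp add: le_iff_add)
  have pending: "\<forall>j'\<ge>j. poised (\<Lambda> j') \<longrightarrow> Next (Until a b) \<in> \<Lambda> j'"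
    using later_time P P_Suc by blast
  have infinitely_poised: "\<forall>j'\<ge>j. \<exists>j''\<ge>j'. poised (\<Lambda> j'')"
  proof (intro allI impI)
    fix j' assume "j \<le> j'"
    then obtain n where n: "time j' = t0 + n" using later_time by blast
    obtain j3 where "time j3 = Suc (time j')" using P[of "Suc n"] n unfolding P_def by auto
    then show "\<exists>j''\<ge>j'. poised (\<Lambda> j'')" using poised_between[of j' j3] by auto
  qed
  obtain j' where j': "j \<le> j'" "b \<in> \<Lambda> j'" using fair[OF infinitely_poised pending] by blast
  then obtain n where "time j' = t0 + n" using later_time by blast
  with j' have "holds_at b (n + t0)" using truthfulD(1)[OF b, of j'] by (simp add: add.commute)
  with P[of n] fails show False unfolding P_def t0_def by auto
qed

lemma neg_until_fails:
  assumes a: "truthful a" and b: "truthful b" and neg_until: "Neg (Until a b) \<in> \<Lambda> j"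
  shows "\<not> holds_at (Until a b) (time j)"
proof -
  define Q where "Q t \<longleftrightarrow> (\<exists>j. time j = t \<and> Neg (Until a b) \<in> \<Lambda> j)" for t
  have Q_step: "\<not> holds_at b t \<and> (\<not> holds_at a t \<or> Q (Suc t))" if Qt: "Q t" for t
  proof -
    obtain j1 where j1: "time j1 = t" "Neg (Until a b) \<in> \<Lambda> j1" using Qt unfolding Q_def by blast
    obtain j2 \<Gamma> where j2: "time j2 = t" "static_child \<Gamma> (Neg (Until a b)) (\<Lambda> j2)"
      using expanded_at_time[OF j1(2)] j1(1) by auto
    then have "Neg b \<in> \<Lambda> j2 \<and>
        (Neg a \<in> \<Lambda> j2 \<or> Next (Neg (Until a b)) \<in> \<Lambda> j2)"
      by (auto simp: static_child_def)
    with j2(1) show ?thesis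
      using truthfulD(2)[OF a] truthfulD(2)[OF b] next_transfers(1)[of "Neg (Until a b)" j2]
      unfolding Q_def by metis
  qed
  have "\<forall>t. Q t \<longrightarrow> (\<forall>i'<i. holds_at a (i' + t)) \<longrightarrow> \<not> holds_at b (i + t)" for i
  proof (induction i)
    case (Suc i)
    show ?case
    proof (intro allI impI)
      fix t assume "Q t" and a_before: "\<forall>i'<Suc i. holds_at a (i' + t)"
      then have "Q (Suc t)" using Q_step by fastforce
      moreover have "\<forall>i'<i. holds_at a (i' + Suc t)" using a_before by auto
      ultimately have "\<not> holds_at b (i + Suc t)" using Suc.IH by blast
      then show "\<not> holds_at b (Suc i + t)" by simp
    qed
  qed (use Q_step in simp)
  moreover have "Q (time j)" using neg_until unfolding Q_def by blast
  ultimately show ?thesis by auto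
qed

lemma truthful_Until:
  assumes "truthful a" "truthful b"
  shows "truthful (Until a b)"
  using until_holds[OF assms] neg_until_fails[OF assms] unfolding truthful_def by blast

lemma truth_lemma: "truthful f"
  by (induction f)
    (auto intro: truthful_Atom truthful_Top truthful_Neg truthful_And truthful_Next truthful_Until)

end

lemma (in tableau_run) run_satisfiable:
  fixes idx :: "nat \<Rightarrow> nat" and B :: "nat \<Rightarrow> 'a ltl set"
  assumes labels: "\<And>j. \<Lambda> j = B (idx j)" and finite_idx: "finite (range idx)"
    and root: "\<phi> \<in> \<Lambda> 0"
  shows "satisfiable \<phi>"
proof -
  define state_at where "state_at t = (\<lambda>j. poised (\<Lambda> j) \<and> time j = t)" for t
  define \<sigma> where "\<sigma> t = idx (if \<exists>j. state_at t j then SOME j. state_at t j else 0)" for t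
  define g :: "nat \<Rightarrow> 'a set" where "g n = {q. Atom q \<in> B n}" for n
  have \<sigma>_time: "\<sigma> (time j) = idx j" if "poised (\<Lambda> j)" for j
  proof -
    have "(SOME i. state_at (time j) i) = j"
      by (rule some_equality) (use that poised_time_unique in \<open>auto simp: state_at_def\<close>)
    then show ?thesis using that by (auto simp: \<sigma>_def state_at_def)
  qed
  interpret valued_run \<Lambda> g \<sigma>
    by unfold_locales (simp add: \<sigma>_time g_def labels)
  have "holds g \<sigma> \<phi>" using truthfulD(1)[OF truth_lemma root] by (simp add: holds_at_def)
  moreover have "ltl_structure (range \<sigma>) {(\<sigma> i, \<sigma> (Suc i)) | i. True}"
  proof -
    have "range \<sigma> \<subseteq> range idx" by (auto simp: \<sigma>_def)
    with finite_idx show ?thesis unfolding ltl_structure_def by (auto intro: finite_subset)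
  qed
  moreover have "fullpath {(\<sigma> i, \<sigma> (Suc i)) | i. True} \<sigma>" unfolding fullpath_def by auto
  ultimately show ?thesis unfolding satisfiable_def by blast
qed

section \<open>Ticked branches\<close>

lemma prefix_eq_take: "prefix w v \<Longrightarrow> w = take (length w) v"
  by (auto simp: prefix_def)

lemma static_step_child:
  assumes "static_step N L u" "w \<in> children N u"
  shows "\<exists>\<chi>. static_child (L u) \<chi> (L w)"
  using assms unfolding static_step_def
  apply (elim conjE bexE)
  subgoal for \<chi> by (rule exI[of _ \<chi>]) (auto simp: static_child_def Let_def)
  done

lemma tableau_branch_step:
  assumes T: "is_tableau up \<phi> N L M" and v: "v \<in> N" and i: "i < length v"
  shows "if poised (L (take i v)) then L (take (Suc i) v) = transition_label (L (take i v))
    else \<exists>\<chi>. static_child (L (take i v)) \<chi> (L (take (Suc i) v))"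
proof -
  define u where "u = take i v"
  have take_Suc: "take (Suc i) v = u @ [v ! i]"
    using i by (simp add: u_def take_Suc_conv_app_nth)
  have closed: "\<And>w. prefix w v \<Longrightarrow> w \<in> N" and nodes: "\<And>w. w \<in> N \<Longrightarrow> tableau_node up N L M w"
    using T v unfolding is_tableau_def by blast+
  have child: "u @ [v ! i] \<in> children N u"
    using closed[OF take_is_prefix[of "Suc i"]] take_Suc by (simp add: children_def)
  have "tableau_node up N L M u" using nodes closed take_is_prefix u_def by metis
  with child have node: "static_step N L u \<or>
      (poised (L u) \<and> children N u = {u @ [0]} \<and> L (u @ [0]) = transition_label (L u))"
    unfolding tableau_node_def by (auto split: if_splits)
  show ?thesis
  proof (cases "poised (L u)")
    case True
    with node child show ?thesis by (auto simp: static_step_def take_Suc u_def)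
  next
    case False
    with node have "static_step N L u" by blast
    with False show ?thesis using static_step_child[OF _ child] by (simp add: take_Suc u_def)
  qed
qed

text \<open>The positions visited by the unwinding of a LOOP leaf at depth k whose companion is at
  depth m: first 0, ..., k, then the cycle m+1, ..., k forever.\<close>

primrec lasso_index :: "nat \<Rightarrow> nat \<Rightarrow> nat \<Rightarrow> nat" where
  "lasso_index m k 0 = 0"
| "lasso_index m k (Suc j) = (if lasso_index m k j < k then Suc (lasso_index m k j) else Suc m)"

lemma lasso_index_le: "m < k \<Longrightarrow> lasso_index m k j \<le> k"
  by (induction j) auto

lemma lasso_index_add:
  "lasso_index m k j + d \<le> k \<Longrightarrow> lasso_index m k (j + d) = lasso_index m k j + d"
  by (induction d) auto

lemma lasso_index_reaches_end:
  assumes "m < k"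
  shows "\<exists>d. lasso_index m k (j + d) = k"
proof -
  have "lasso_index m k (j + (k - lasso_index m k j)) = k"
    using lasso_index_add[of m k j "k - lasso_index m k j"] lasso_index_le[OF assms, of j] by simp
  then show ?thesis by blast
qed

lemma lasso_index_after_end:
  "lasso_index m k j = k \<Longrightarrow> Suc m + d \<le> k \<Longrightarrow> lasso_index m k (Suc j + d) = Suc m + d"
  using lasso_index_add[of m k "Suc j" d] by simp

lemma lasso_index_visits_cycle:
  assumes "m < n" "n \<le> k"
  shows "\<exists>j'\<ge>j. lasso_index m k j' = n"
proof -
  obtain d where "lasso_index m k (j + d) = k"
    using lasso_index_reaches_end assms by fastforce
  then have "lasso_index m k (Suc (j + d) + (n - Suc m)) = n"
    using lasso_index_after_end[of m k "j + d" "n - Suc m"] assms by simp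
  then show ?thesis by (intro exI[of _ "Suc (j + d) + (n - Suc m)"]) simp
qed

lemma empty_leaf_satisfiable:
  assumes T: "is_tableau up \<phi> N L M" and v: "v \<in> N" "L v = {}"
  shows "satisfiable \<phi>"
proof -
  define k where "k = length v"
  define \<Lambda> where "\<Lambda> j = L (take (min j k) v)" for j
  have empty_after: "\<Lambda> j = {}" if "k \<le> j" for j
    using that v(2) by (simp add: \<Lambda>_def k_def)
  have step: "j < k \<Longrightarrow> if poised (\<Lambda> j) then \<Lambda> (Suc j) = transition_label (\<Lambda> j)
      else \<exists>\<chi>. static_child (\<Lambda> j) \<chi> (\<Lambda> (Suc j))" for j
    using tableau_branch_step[OF T v(1), of j] by (simp add: \<Lambda>_def k_def)
  have poised_before: "j < k" if "poised (\<Lambda> j)" for j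
    using that empty_after[of j] unfolding poised_def by force
  interpret tableau_run \<Lambda>
  proof
    fix j
    show "\<not> poised (\<Lambda> j) \<Longrightarrow> \<Lambda> j = {} \<or> (\<exists>\<chi>. static_child (\<Lambda> j) \<chi> (\<Lambda> (Suc j)))"
      using step[of j] empty_after[of j] by (cases "j < k") auto
    show "poised (\<Lambda> j) \<Longrightarrow> transition_label (\<Lambda> j) \<subseteq> \<Lambda> (Suc j)"
      using step[of j] poised_before[of j] by auto
    show "\<exists>d. poised (\<Lambda> (j + d)) \<or> \<Lambda> (j + d) = {}"
      using empty_after[of "j + k"] by auto
  next
    fix j :: nat and a b
    assume "\<forall>j'\<ge>j. \<exists>j''\<ge>j'. poised (\<Lambda> j'')"
    then obtain j'' where "j + k \<le> j''" "poised (\<Lambda> j'')" using le_add1 by blast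
    with poised_before show "\<exists>j'\<ge>j. b \<in> \<Lambda> j'" by fastforce
  qed
  show ?thesis
  proof (rule run_satisfiable[where idx = "\<lambda>j. min j k" and B = "\<lambda>n. L (take n v)"])
    show "finite (range (\<lambda>j. min j k))"
      by (rule finite_subset[of _ "{..k}"]) auto
    show "\<phi> \<in> \<Lambda> 0" using T by (simp add: \<Lambda>_def is_tableau_def)
  qed (simp add: \<Lambda>_def)
qed

lemma loop_leaf_run:
  assumes T: "is_tableau up \<phi> N L M" and v: "v \<in> N" and poised_v: "poised (L v)"
    and u: "strict_prefix u v" "poised (L u)" "L v \<subseteq> L u"
    and fulfilled: "\<And>a b. Next (Until a b) \<in> L u \<Longrightarrow> \<exists>w. strict_prefix u w \<and> prefix w v \<and> b \<in> L w"
  shows "tableau_run (\<lambda>j. L (take (lasso_index (length u) (length v) j) v))"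
proof -
  define k where "k = length v"
  define m where "m = length u"
  have "m < k" using u(1) prefix_length_less by (auto simp: k_def m_def)
  define \<Lambda> where "\<Lambda> j = L (take (lasso_index m k j) v)" for j
  have at_end: "\<Lambda> j = L v" if "lasso_index m k j = k" for j
    using that by (simp add: \<Lambda>_def k_def)
  have step: "lasso_index m k j < k \<Longrightarrow> if poised (\<Lambda> j) then \<Lambda> (Suc j) = transition_label (\<Lambda> j)
      else \<exists>\<chi>. static_child (\<Lambda> j) \<chi> (\<Lambda> (Suc j))" for j
    using tableau_branch_step[OF T v, of "lasso_index m k j"] unfolding \<Lambda>_def k_def by simp
  have loop_step: "transition_label (\<Lambda> j) \<subseteq> \<Lambda> (Suc j)" if "lasso_index m k j = k" for j
  proof -
    have "L (take m v) = L u" using prefix_eq_take[OF prefix_order.less_imp_le[OF u(1)]] m_def by simp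
    then have "\<Lambda> (Suc j) = transition_label (L u)"
      using tableau_branch_step[OF T v, of m] \<open>m < k\<close> u(2) that by (simp add: \<Lambda>_def k_def)
    with at_end[OF that] show ?thesis using transition_label_mono[OF u(3)] by simp
  qed
  have "tableau_run \<Lambda>"
  proof
    fix j
    have "lasso_index m k j < k" if "\<not> poised (\<Lambda> j)"
      using that at_end[of j] poised_v lasso_index_le[OF \<open>m < k\<close>, of j]
      by (cases "lasso_index m k j = k") auto
    then show "\<not> poised (\<Lambda> j) \<Longrightarrow> \<Lambda> j = {} \<or> (\<exists>\<chi>. static_child (\<Lambda> j) \<chi> (\<Lambda> (Suc j)))"
      using step[of j] by auto
    show "poised (\<Lambda> j) \<Longrightarrow> transition_label (\<Lambda> j) \<subseteq> \<Lambda> (Suc j)"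
      using step[of j] loop_step[of j] lasso_index_le[OF \<open>m < k\<close>, of j]
      by (cases "lasso_index m k j = k") auto
    show "\<exists>d. poised (\<Lambda> (j + d)) \<or> \<Lambda> (j + d) = {}"
      using lasso_index_reaches_end[OF \<open>m < k\<close>] at_end poised_v by metis
  next
    fix j :: nat and a b
    assume pending: "\<forall>j'\<ge>j. poised (\<Lambda> j') \<longrightarrow> Next (Until a b) \<in> \<Lambda> j'"
    obtain d where "lasso_index m k (j + d) = k"
      using lasso_index_reaches_end[OF \<open>m < k\<close>] by blast
    with pending have "Next (Until a b) \<in> L v" using at_end poised_v le_add1 by metis
    then obtain w where w: "strict_prefix u w" "prefix w v" "b \<in> L w" using fulfilled u(3) by blast
    have "m < length w" "length w \<le> k"
      using prefix_length_less[OF w(1)] prefix_length_le[OF w(2)] by (auto simp: m_def k_def)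
    then obtain j' where "j \<le> j'" "lasso_index m k j' = length w"
      using lasso_index_visits_cycle by blast
    moreover have "L (take (length w) v) = L w" using prefix_eq_take[OF w(2)] by simp
    ultimately show "\<exists>j'\<ge>j. b \<in> \<Lambda> j'" using w(3) by (auto simp: \<Lambda>_def)
  qed
  then show ?thesis unfolding \<Lambda>_def[abs_def] k_def m_def .
qed

lemma loop_leaf_satisfiable:
  assumes T: "is_tableau up \<phi> N L M" and v: "v \<in> N" "loop_app L v"
  shows "satisfiable \<phi>"
proof -
  obtain u where u: "strict_prefix u v" "poised (L u)" "L v \<subseteq> L u"
    and "\<And>a b. Next (Until a b) \<in> L u \<Longrightarrow> \<exists>w. strict_prefix u w \<and> prefix w v \<and> b \<in> L w"
    and "poised (L v)"
    using v(2) unfolding loop_app_def by blast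
  then interpret tableau_run "\<lambda>j. L (take (lasso_index (length u) (length v) j) v)"
    using loop_leaf_run[OF T v(1)] by blast
  have "length u < length v" using u(1) prefix_length_less by blast
  show ?thesis
  proof (rule run_satisfiable[where idx = "lasso_index (length u) (length v)"])
    show "finite (range (lasso_index (length u) (length v)))"
      using lasso_index_le[OF \<open>length u < length v\<close>]
      by (auto intro: finite_subset[of _ "{..length v}"])
  qed (use T in \<open>auto simp: is_tableau_def\<close>)
qed

theorem mainTheorem2:
  fixes \<phi> :: "'a ltl"
    and N :: "nat list set" and L :: "nat list \<Rightarrow> 'a ltl set" and M :: "nat list \<Rightarrow> mark"
    and use_prune :: bool
  assumes "is_tableau use_prune \<phi> N L M"
    and "\<exists>v\<in>N. M v = Ticked"
  shows "satisfiable \<phi>"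
proof -
  obtain v where v: "v \<in> N" "M v = Ticked" using assms(2) by blast
  then have "L v = {} \<or> loop_app L v"
    using assms(1) unfolding is_tableau_def tableau_node_def by (auto split: if_splits)
  then show ?thesis
    using empty_leaf_satisfiable[OF assms(1) v(1)] loop_leaf_satisfiable[OF assms(1) v(1)] by blast
qed

end
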